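(* Let $G$ be a large scale group, let $K$ be a symmetric bounded subset of $G$ containing $1_G$, and let $B$ be a bounded subset of $G$ such that $G\setminus B$ has exactly two $K$-components $L$ and $R$, both unbounded, and $G$ acts trivially on $L$ and on $R$. Suppose one of the following holds: (1) $B$ is $K$-connected; (2) $B\subseteq h\cdot K^n$ for some $h\in G$ and $n\ge1$. Then $G$ has a cyclic subgroup of bounded index.
   Context: A bornology on a set is a cover closed under subsets and finite unions. A large scale group is a group $G$ with a bornology $\mathcal B$ closed under inverses and products; its uniformly bounded covers are the covers refining $\{gB\}_{g\in G}$ for some $B\in\mathcal B$; bounded sets are members of $\mathcal B$. $K^n$ denotes the $n$-fold product set $K\cdots K$. For a symmetric $K\subseteq G$ ($K^{-1}=K$), a $K$-chain is a finite sequence $g_1,\dots,g_k$ in $G$ with $g_i^{-1}g_{i+1}\in K$ for all $i<k$; a set $C$ is $K$-connected if any two of its elements are joined by a $K$-chain in $C$; the $K$-components of $A\subseteq G$ are the equivalence classes of $A$ under the relation "joined by a $K$-chain lying in $A$". $G$ acts trivially on $A\subseteq G$ if the symmetric difference $A\,\Delta\,(g\cdot A)$ is bounded for each $g\in G$. A subgroup $H$ is of bounded index if $B'\cdot H=G$ for some bounded $B'$. *)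

theory Defs
  imports "HOL-Algebra.Coset"
begin

definition bornology :: "'a set \<Rightarrow> 'a set set \<Rightarrow> bool" where
  "bornology X \<B> \<longleftrightarrow>
     (\<forall>B\<in>\<B>. B \<subseteq> X) \<and> (\<forall>x\<in>X. \<exists>B\<in>\<B>. x \<in> B) \<and>
     (\<forall>B\<in>\<B>. \<forall>C. C \<subseteq> B \<longrightarrow> C \<in> \<B>) \<and>
     (\<forall>B\<in>\<B>. \<forall>C\<in>\<B>. B \<union> C \<in> \<B>)"

definition large_scale_group :: "('a, 'b) monoid_scheme \<Rightarrow> 'a set set \<Rightarrow> bool" where
  "large_scale_group G \<B> \<longleftrightarrow> group G \<and> bornology (carrier G) \<B> \<and>
     (\<forall>B\<in>\<B>. (\<lambda>x. inv\<^bsub>G\<^esub> x) ` B \<in> \<B>) \<and>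
     (\<forall>B\<in>\<B>. \<forall>C\<in>\<B>. B <#>\<^bsub>G\<^esub> C \<in> \<B>)"

fun set_pow :: "('a, 'b) monoid_scheme \<Rightarrow> 'a set \<Rightarrow> nat \<Rightarrow> 'a set" where
  "set_pow G K 0 = {\<one>\<^bsub>G\<^esub>}"
| "set_pow G K (Suc 0) = K"
| "set_pow G K (Suc (Suc n)) = set_pow G K (Suc n) <#>\<^bsub>G\<^esub> K"

definition K_chain :: "('a, 'b) monoid_scheme \<Rightarrow> 'a set \<Rightarrow> 'a list \<Rightarrow> bool" where
  "K_chain G K xs \<longleftrightarrow> xs \<noteq> [] \<and> set xs \<subseteq> carrier G \<and>
     (\<forall>i. Suc i < length xs \<longrightarrow> inv\<^bsub>G\<^esub> (xs ! i) \<otimes>\<^bsub>G\<^esub> (xs ! Suc i) \<in> K)"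

definition K_joined_in :: "('a, 'b) monoid_scheme \<Rightarrow> 'a set \<Rightarrow> 'a set \<Rightarrow> 'a \<Rightarrow> 'a \<Rightarrow> bool" where
  "K_joined_in G K A x y \<longleftrightarrow>
     (\<exists>xs. K_chain G K xs \<and> set xs \<subseteq> A \<and> hd xs = x \<and> last xs = y)"

definition K_connected :: "('a, 'b) monoid_scheme \<Rightarrow> 'a set \<Rightarrow> 'a set \<Rightarrow> bool" where
  "K_connected G K C \<longleftrightarrow> (\<forall>x\<in>C. \<forall>y\<in>C. K_joined_in G K C x y)"

definition K_components :: "('a, 'b) monoid_scheme \<Rightarrow> 'a set \<Rightarrow> 'a set \<Rightarrow> 'a set set" where
  "K_components G K A = {{y \<in> A. K_joined_in G K A x y} | x. x \<in> A}"

definition acts_trivially :: "('a, 'b) monoid_scheme \<Rightarrow> 'a set set \<Rightarrow> 'a set \<Rightarrow> bool" where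
  "acts_trivially G \<B> A \<longleftrightarrow>
     (\<forall>g\<in>carrier G. (A - (g <#\<^bsub>G\<^esub> A)) \<union> ((g <#\<^bsub>G\<^esub> A) - A) \<in> \<B>)"

definition bounded_index :: "('a, 'b) monoid_scheme \<Rightarrow> 'a set set \<Rightarrow> 'a set \<Rightarrow> bool" where
  "bounded_index G \<B> H \<longleftrightarrow> (\<exists>B'\<in>\<B>. B' <#>\<^bsub>G\<^esub> H = carrier G)"

end

theory Submission
  imports Defs "HOL-Algebra.Elementary_Groups"
begin

text \<open>
  Every point of \<open>G\<close> is joined to \<open>B\<close> by a \<open>K\<close>-chain: otherwise its
  \<open>K\<close>-component in \<open>G\<close> would be \<open>L\<close> or \<open>R\<close>, and some translate of that component
  would be disjoint from it, which is impossible for an unbounded set on which \<open>G\<close> acts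
  trivially. Enlarge \<open>B\<close> to a bounded \<open>K\<close>-connected set \<open>C\<close> (\<open>B\<close> itself, or
  \<open>h K\<^sup>n\<close>). As \<open>R\<close> is unbounded, some \<open>g\<close> moves \<open>C\<close> into \<open>R\<close> and off \<open>C\<close>;
  then \<open>g\<^sup>-\<^sup>1\<close> maps the \<open>K\<close>-connected set \<open>L \<union> C\<close> into a single component, which must
  be \<open>L\<close> because \<open>L\<close> cannot be moved off itself. So \<open>g\<close> maps \<open>R \<union> B\<close> into \<open>R\<close>
  and \<open>g\<^sup>-\<^sup>1\<close> maps \<open>L \<union> B\<close> into \<open>L\<close>. Following a \<open>K\<close>-chain from \<open>B\<close>, the orbit
  \<open>g\<^sup>n x\<close> of any \<open>x\<close> eventually stays in \<open>R\<close> as \<open>n \<rightarrow> \<infinity>\<close> and in \<open>L\<close> as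
  \<open>n \<rightarrow> -\<infinity>\<close>, so at the crossing it lies in the bounded set \<open>D = R - g R\<close>. Hence
  \<open>G = D\<^sup>-\<^sup>1 \<langle>g\<rangle>\<close>.
\<close>

section \<open>K-chains and K-components\<close>

definition K_adj :: "('a, 'b) monoid_scheme \<Rightarrow> 'a set \<Rightarrow> 'a set \<Rightarrow> 'a \<Rightarrow> 'a \<Rightarrow> bool" where
  "K_adj G K A x y \<longleftrightarrow> x \<in> A \<and> y \<in> A \<and> inv\<^bsub>G\<^esub> x \<otimes>\<^bsub>G\<^esub> y \<in> K"

text \<open>For \<open>x \<notin> A\<close> this is \<open>{x}\<close>, not a \<open>K\<close>-component of \<open>A\<close>.\<close>
definition K_component :: "('a, 'b) monoid_scheme \<Rightarrow> 'a set \<Rightarrow> 'a set \<Rightarrow> 'a \<Rightarrow> 'a set" where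
  "K_component G K A x = {y. (K_adj G K A)\<^sup>*\<^sup>* x y}"

lemma K_chain_Cons_Cons:
  "K_chain G K (x # y # ys) \<longleftrightarrow>
     x \<in> carrier G \<and> inv\<^bsub>G\<^esub> x \<otimes>\<^bsub>G\<^esub> y \<in> K \<and> K_chain G K (y # ys)"
  unfolding K_chain_def by (auto simp: less_Suc_eq_0_disj)

lemma rtranclp_K_adj_in:
  "(K_adj G K A)\<^sup>*\<^sup>* x y \<Longrightarrow> x \<in> A \<Longrightarrow> y \<in> A"
  by (induction rule: rtranclp_induct) (auto simp: K_adj_def)

lemma K_joined_in_imp_rtranclp:
  assumes "K_joined_in G K A x y"
  shows "x \<in> A \<and> (K_adj G K A)\<^sup>*\<^sup>* x y"
proof -
  obtain xs where "K_chain G K xs" "set xs \<subseteq> A" "hd xs = x" "last xs = y"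
    using assms unfolding K_joined_in_def by blast
  then show ?thesis
  proof (induction xs arbitrary: x)
    case (Cons a xs)
    show ?case
    proof (cases xs)
      case (Cons b ys)
      with Cons.prems have "K_adj G K A a b" and "(K_adj G K A)\<^sup>*\<^sup>* b y"
        using Cons.IH[of b] by (auto simp: K_chain_Cons_Cons) (simp add: K_adj_def)
      with Cons.prems show ?thesis by (auto intro: converse_rtranclp_into_rtranclp)
    qed (use Cons.prems in auto)
  qed (simp add: K_chain_def)
qed

lemma rtranclp_imp_K_joined_in:
  assumes "(K_adj G K A)\<^sup>*\<^sup>* x y" "x \<in> A" "A \<subseteq> carrier G"
  shows "K_joined_in G K A x y"
  using assms
proof (induction rule: converse_rtranclp_induct)
  case base
  then show ?case unfolding K_joined_in_def K_chain_def by (intro exI[of _ "[y]"]) auto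
next
  case (step x z)
  then obtain xs where xs: "K_chain G K xs" "set xs \<subseteq> A" "hd xs = z" "last xs = y"
    unfolding K_joined_in_def K_adj_def by blast
  then obtain ys where "xs = z # ys" by (cases xs) (auto simp: K_chain_def)
  with xs step show ?case
    unfolding K_joined_in_def by (intro exI[of _ "x # xs"]) (auto simp: K_chain_Cons_Cons K_adj_def)
qed

lemma K_joined_in_iff:
  "A \<subseteq> carrier G \<Longrightarrow> K_joined_in G K A x y \<longleftrightarrow> x \<in> A \<and> (K_adj G K A)\<^sup>*\<^sup>* x y"
  using K_joined_in_imp_rtranclp rtranclp_imp_K_joined_in by metis

lemma K_components_eq:
  assumes "A \<subseteq> carrier G"
  shows "K_components G K A = K_component G K A ` A"
proof -
  have "{y \<in> A. K_joined_in G K A x y} = K_component G K A x" if "x \<in> A" for x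
    using that rtranclp_K_adj_in[of G K A x] K_joined_in_iff[OF assms]
    unfolding K_component_def by blast
  then show ?thesis unfolding K_components_def by auto
qed

lemma K_connected_imp_rtranclp:
  "K_connected G K C \<Longrightarrow> x \<in> C \<Longrightarrow> y \<in> C \<Longrightarrow> (K_adj G K C)\<^sup>*\<^sup>* x y"
  unfolding K_connected_def using K_joined_in_imp_rtranclp by metis

lemma exists_int_crossing:
  assumes "\<not> P (m\<^sub>0 :: int)" "P (m\<^sub>0 + int j)"
  shows "\<exists>m. \<not> P (m - 1) \<and> P m"
  using assms(2)
proof (induction j)
  case (Suc j)
  then show ?case
    by (cases "P (m\<^sub>0 + int j)") (auto intro!: exI[of _ "m\<^sub>0 + int (Suc j)"])
qed (use assms(1) in simp)

lemma rtranclp_K_adj_mono: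
  assumes "A \<subseteq> A'" "(K_adj G K A)\<^sup>*\<^sup>* x y"
  shows "(K_adj G K A')\<^sup>*\<^sup>* x y"
  using assms(2) by (rule rtranclp_mono[THEN predicate2D, rotated]) (use assms(1) in \<open>auto simp: K_adj_def\<close>)

lemma K_component_restrict:
  assumes "A' \<subseteq> A" "K_component G K A y \<subseteq> A'"
  shows "K_component G K A' y = K_component G K A y"
proof
  have "(K_adj G K A')\<^sup>*\<^sup>* y z" if "(K_adj G K A)\<^sup>*\<^sup>* y z" for z
    using that
  proof (induction rule: rtranclp_induct)
    case (step z w)
    then have "K_adj G K A' z w"
      using assms(2) unfolding K_component_def K_adj_def
      by (auto intro: rtranclp.rtrancl_into_rtrancl)
    with step(3) show ?case by (rule rtranclp.rtrancl_into_rtrancl)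
  qed simp
  then show "K_component G K A y \<subseteq> K_component G K A' y"
    unfolding K_component_def by blast
  show "K_component G K A' y \<subseteq> K_component G K A y"
    using rtranclp_K_adj_mono[OF assms(1)] unfolding K_component_def by blast
qed

context group
begin

lemma K_adj_sym:
  assumes "(\<lambda>x. inv x) ` K = K" "K_adj G K A x y" "A \<subseteq> carrier G"
  shows "K_adj G K A y x"
proof -
  have "x \<in> carrier G" "y \<in> carrier G" using assms(2,3) by (auto simp: K_adj_def)
  then have "inv y \<otimes> x = inv (inv x \<otimes> y)" by (simp add: inv_mult_group)
  then show ?thesis using assms(1,2) unfolding K_adj_def by auto
qed

lemma rtranclp_K_adj_sym:
  assumes "(\<lambda>x. inv x) ` K = K" "A \<subseteq> carrier G" "(K_adj G K A)\<^sup>*\<^sup>* x y"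
  shows "(K_adj G K A)\<^sup>*\<^sup>* y x"
  using assms(3) K_adj_sym[OF assms(1) _ assms(2)]
  by (metis sympD sympI symp_rtranclp)

lemma K_component_eq:
  assumes "(\<lambda>x. inv x) ` K = K" "A \<subseteq> carrier G" "y \<in> K_component G K A x"
  shows "K_component G K A y = K_component G K A x"
proof -
  have "(K_adj G K A)\<^sup>*\<^sup>* x y" "(K_adj G K A)\<^sup>*\<^sup>* y x"
    using assms(3) rtranclp_K_adj_sym[OF assms(1,2)] unfolding K_component_def by auto
  then show ?thesis unfolding K_component_def by (blast intro: rtranclp_trans)
qed

lemma K_adj_translate:
  assumes "g \<in> carrier G" "A \<subseteq> carrier G" "\<And>a. a \<in> A \<Longrightarrow> g \<otimes> a \<in> A'"
    and "K_adj G K A x y"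
  shows "K_adj G K A' (g \<otimes> x) (g \<otimes> y)"
proof -
  have "x \<in> carrier G" "y \<in> carrier G" using assms(2,4) by (auto simp: K_adj_def)
  then have "inv (g \<otimes> x) \<otimes> (g \<otimes> y) = inv x \<otimes> y"
    using assms(1) by (simp add: inv_mult_group m_assoc) (simp flip: m_assoc)
  then show ?thesis using assms(3,4) by (auto simp: K_adj_def)
qed

lemma rtranclp_K_adj_translate:
  assumes "g \<in> carrier G" "A \<subseteq> carrier G" "\<And>a. a \<in> A \<Longrightarrow> g \<otimes> a \<in> A'"
    and "(K_adj G K A)\<^sup>*\<^sup>* x y"
  shows "(K_adj G K A')\<^sup>*\<^sup>* (g \<otimes> x) (g \<otimes> y)"
  using assms(4)
proof (induction rule: rtranclp_induct)
  case (step y z)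
  with K_adj_translate[OF assms(1-3) step(2)] show ?case by simp
qed simp

lemma nat_pow_mult_mem:
  assumes "g \<in> carrier G" "b \<in> carrier G" "b \<in> Y \<union> Z" "\<And>z. z \<in> Y \<union> Z \<Longrightarrow> g \<otimes> z \<in> Y"
    and "1 \<le> (n::nat)"
  shows "g [^] n \<otimes> b \<in> Y"
  using assms(5)
proof (induction n rule: nat_induct_at_least)
  case (Suc n)
  have "g [^] Suc n \<otimes> b = (g \<otimes> g [^] n) \<otimes> b"
    using assms(1) by (simp only: nat_pow_Suc2)
  also have "\<dots> = g \<otimes> (g [^] n \<otimes> b)"
    using assms(1,2) by (simp add: m_assoc)
  finally have "g [^] Suc n \<otimes> b = g \<otimes> (g [^] n \<otimes> b)" .
  then show ?case using Suc.IH assms(4) by simp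
qed (use assms in simp)

lemma set_pow_carrier: "K \<subseteq> carrier G \<Longrightarrow> set_pow G K n \<subseteq> carrier G"
proof (induction n)
  case (Suc n)
  then show ?case by (cases n) (auto simp: set_mult_closed)
qed simp

lemma set_pow_Suc:
  assumes "K \<subseteq> carrier G"
  shows "set_pow G K (Suc n) = set_pow G K n <#> K"
proof (cases n)
  case 0
  have "{\<one>} <#> K = K" using assms unfolding set_mult_def by force
  then show ?thesis using 0 by simp
qed simp

lemma set_pow_subset_Suc:
  assumes "K \<subseteq> carrier G" "\<one> \<in> K"
  shows "set_pow G K n \<subseteq> set_pow G K (Suc n)"
  using set_pow_carrier[OF assms(1)] assms(2)
  unfolding set_pow_Suc[OF assms(1)] set_mult_def by force

lemma one_in_set_pow:
  assumes "K \<subseteq> carrier G" "\<one> \<in> K"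
  shows "\<one> \<in> set_pow G K n"
  by (induction n) (use set_pow_subset_Suc[OF assms] in auto)

lemma rtranclp_K_adj_set_pow:
  assumes "K \<subseteq> carrier G" "\<one> \<in> K" "x \<in> set_pow G K n"
  shows "(K_adj G K (set_pow G K n))\<^sup>*\<^sup>* \<one> x"
  using assms(3)
proof (induction n arbitrary: x)
  case (Suc n)
  note grow = set_pow_subset_Suc[OF assms(1,2), of n]
  from Suc.prems obtain y k where y: "y \<in> set_pow G K n" "k \<in> K" "x = y \<otimes> k"
    unfolding set_pow_Suc[OF assms(1)] set_mult_def by blast
  then have "y \<in> carrier G" "k \<in> carrier G" using set_pow_carrier[OF assms(1)] assms(1) by auto
  then have "K_adj G K (set_pow G K (Suc n)) y x"
    using y grow Suc.prems by (auto simp: K_adj_def simp flip: m_assoc)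
  moreover have "(K_adj G K (set_pow G K (Suc n)))\<^sup>*\<^sup>* \<one> y"
    using rtranclp_K_adj_mono[OF grow] Suc.IH y(1) by blast
  ultimately show ?case by (simp add: rtranclp.rtrancl_into_rtrancl)
qed simp

lemma rtranclp_K_adj_l_coset_set_pow:
  assumes "K \<subseteq> carrier G" "\<one> \<in> K" "h \<in> carrier G" "c \<in> h <# set_pow G K n"
  shows "(K_adj G K (h <# set_pow G K n))\<^sup>*\<^sup>* h c"
proof -
  obtain x where x: "x \<in> set_pow G K n" "c = h \<otimes> x"
    using assms(4) unfolding l_coset_def by blast
  have coset_mem: "h \<otimes> a \<in> h <# set_pow G K n" if "a \<in> set_pow G K n" for a
    using that unfolding l_coset_def by blast
  have "(K_adj G K (h <# set_pow G K n))\<^sup>*\<^sup>* (h \<otimes> \<one>) (h \<otimes> x)"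
    by (rule rtranclp_K_adj_translate[OF assms(3) set_pow_carrier[OF assms(1)] coset_mem
          rtranclp_K_adj_set_pow[OF assms(1,2) x(1)]])
  then show ?thesis using x assms(3) by simp
qed

end

section \<open>Bounded sets of a large scale group\<close>

locale large_scale_structure = group +
  fixes \<B> :: "'a set set"
  assumes large_scale: "large_scale_group G \<B>"
begin

lemma bornology: "bornology (carrier G) \<B>"
  using large_scale by (simp add: large_scale_group_def)

lemma bounded_subset:
  assumes "X \<in> \<B>" "Y \<subseteq> X"
  shows "Y \<in> \<B>"
proof -
  have "\<forall>B\<in>\<B>. \<forall>C. C \<subseteq> B \<longrightarrow> C \<in> \<B>" using bornology by (simp add: bornology_def)
  with assms show ?thesis by blast
qed

lemma bounded_subset_carrier: "X \<in> \<B> \<Longrightarrow> X \<subseteq> carrier G"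
  using bornology by (simp add: bornology_def)

lemma bounded_singleton: "x \<in> carrier G \<Longrightarrow> {x} \<in> \<B>"
proof -
  assume "x \<in> carrier G"
  moreover have "\<forall>x\<in>carrier G. \<exists>B\<in>\<B>. x \<in> B" using bornology by (simp add: bornology_def)
  ultimately obtain X where "X \<in> \<B>" "x \<in> X" by blast
  then show "{x} \<in> \<B>" by (simp add: bounded_subset)
qed

lemma bounded_empty: "{} \<in> \<B>"
  using bounded_subset bounded_singleton[OF one_closed] by blast

lemma bounded_set_mult: "X \<in> \<B> \<Longrightarrow> Y \<in> \<B> \<Longrightarrow> X <#> Y \<in> \<B>"
  using large_scale by (simp add: large_scale_group_def)

lemma bounded_inv_image: "X \<in> \<B> \<Longrightarrow> (\<lambda>x. inv x) ` X \<in> \<B>"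
  using large_scale by (simp add: large_scale_group_def)

lemma bounded_l_coset: "g \<in> carrier G \<Longrightarrow> X \<in> \<B> \<Longrightarrow> g <# X \<in> \<B>"
  by (simp add: l_coset_eq_set_mult bounded_set_mult bounded_singleton)

lemma bounded_r_coset: "g \<in> carrier G \<Longrightarrow> X \<in> \<B> \<Longrightarrow> X #> g \<in> \<B>"
  by (simp add: r_coset_eq_set_mult bounded_set_mult bounded_singleton)

lemma bounded_set_pow: "K \<in> \<B> \<Longrightarrow> set_pow G K n \<in> \<B>"
proof (induction n)
  case (Suc n)
  then show ?case by (cases n) (auto simp: bounded_set_mult)
qed (simp add: bounded_singleton)

lemma acts_trivially_translate_meets:
  assumes "acts_trivially G \<B> P" "P \<notin> \<B>" "g \<in> carrier G"
  shows "P \<inter> (g <# P) \<noteq> {}"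
proof
  assume "P \<inter> (g <# P) = {}"
  then have "P \<subseteq> (P - (g <# P)) \<union> ((g <# P) - P)" by blast
  then show False
    using assms bounded_subset unfolding acts_trivially_def by blast
qed

end

section \<open>A bounded set cutting the group into two components\<close>

locale two_component_cut = large_scale_structure +
  fixes K B L R :: "'a set"
  assumes K_sym: "(\<lambda>x. inv x) ` K = K"
    and B_bounded: "B \<in> \<B>"
    and components: "K_components G K (carrier G - B) = {L, R}"
    and L_neq_R: "L \<noteq> R"
    and L_unbounded: "L \<notin> \<B>" and R_unbounded: "R \<notin> \<B>"
    and L_trivial: "acts_trivially G \<B> L" and R_trivial: "acts_trivially G \<B> R"
begin

lemma components_eq_image: "K_component G K (carrier G - B) ` (carrier G - B) = {L, R}"
  using components K_components_eq[of "carrier G - B" G K, OF Diff_subset] by simp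

lemma B_carrier: "B \<subseteq> carrier G"
  using B_bounded bounded_subset_carrier by blast

lemma component_is_K_component:
  assumes "P \<in> {L, R}"
  obtains x where "x \<in> carrier G - B" "P = K_component G K (carrier G - B) x"
proof -
  have "P \<in> K_component G K (carrier G - B) ` (carrier G - B)"
    using assms components_eq_image by simp
  then show ?thesis using that by blast
qed

lemma component_eq:
  assumes "P \<in> {L, R}" "u \<in> P"
  shows "P = K_component G K (carrier G - B) u"
proof -
  obtain x where "P = K_component G K (carrier G - B) x"
    using component_is_K_component[OF assms(1)] .
  with assms(2) show ?thesis using K_component_eq[OF K_sym, of "carrier G - B", OF Diff_subset] by simp
qed

lemma component_subset:
  assumes "P \<in> {L, R}"
  shows "P \<subseteq> carrier G - B"
proof -
  obtain x where "x \<in> carrier G - B" "P = K_component G K (carrier G - B) x"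
    using component_is_K_component[OF assms] .
  then show ?thesis
    using rtranclp_K_adj_in[of G K "carrier G - B" x] unfolding K_component_def by blast
qed

lemma L_R_disjoint: "L \<inter> R = {}"
proof (rule equals0I)
  fix z assume "z \<in> L \<inter> R"
  then have "L = K_component G K (carrier G - B) z" "R = K_component G K (carrier G - B) z"
    using component_eq[of L z] component_eq[of R z] by auto
  with L_neq_R show False by simp
qed

lemma L_Un_R: "L \<union> R = carrier G - B"
proof
  show "L \<union> R \<subseteq> carrier G - B" using component_subset by blast
  show "carrier G - B \<subseteq> L \<union> R"
  proof
    fix y assume "y \<in> carrier G - B"
    then have "K_component G K (carrier G - B) y \<in> {L, R}"
      using components_eq_image by blast
    then show "y \<in> L \<union> R" unfolding K_component_def by auto
  qed
qed

lemma L_nonempty: "L \<noteq> {}"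
  using L_unbounded bounded_empty by blast

lemma R_nonempty: "R \<noteq> {}"
  using R_unbounded bounded_empty by blast

lemma K_adj_from_component:
  assumes "P \<in> {L, R}" "u \<in> P" "K_adj G K (carrier G) u w"
  shows "w \<in> P \<union> B"
proof (cases "w \<in> B")
  case False
  with assms have "K_adj G K (carrier G - B) u w"
    using component_subset[OF assms(1)] by (auto simp: K_adj_def)
  then show ?thesis using component_eq[OF assms(1,2)] unfolding K_component_def by auto
qed simp

lemma component_translate_meets:
  assumes "P \<in> {L, R}" "g \<in> carrier G"
  shows "P \<inter> (g <# P) \<noteq> {}"
proof -
  have "acts_trivially G \<B> P" "P \<notin> \<B>"
    using assms(1) L_unbounded R_unbounded L_trivial R_trivial by auto
  then show ?thesis using acts_trivially_translate_meets assms(2) by blast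
qed

lemma joined_to_B:
  assumes "y \<in> carrier G"
  shows "\<exists>b\<in>B. (K_adj G K (carrier G))\<^sup>*\<^sup>* b y"
proof (rule ccontr)
  assume no_path: "\<not> ?thesis"
  let ?M = "K_component G K (carrier G) y"
  have sym: "(K_adj G K (carrier G))\<^sup>*\<^sup>* v u" if "(K_adj G K (carrier G))\<^sup>*\<^sup>* u v" for u v
    using rtranclp_K_adj_sym[OF K_sym subset_refl that] .
  have M_avoids_B: "?M \<subseteq> carrier G - B"
    using no_path sym rtranclp_K_adj_in[of G K "carrier G" y] assms
    unfolding K_component_def by blast
  then obtain P where P: "P \<in> {L, R}" "y \<in> P"
    using L_Un_R unfolding K_component_def by blast
  have M_eq_P: "?M = P"
    using component_eq[OF P] K_component_restrict[OF Diff_subset M_avoids_B] by simp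
  have "L \<union> R \<noteq> P" using P L_R_disjoint L_nonempty R_nonempty by blast
  then obtain x where x: "x \<in> carrier G" "x \<notin> P"
    using P L_Un_R by blast
  define g where "g = x \<otimes> inv y"
  have g: "g \<in> carrier G" "g \<otimes> y = x" using x assms by (simp_all add: g_def m_assoc)
  have "g \<otimes> p \<notin> P" if "p \<in> P" for p
  proof
    assume "g \<otimes> p \<in> P"
    then have "(K_adj G K (carrier G))\<^sup>*\<^sup>* (g \<otimes> p) y"
      using M_eq_P sym unfolding K_component_def by blast
    moreover have "(K_adj G K (carrier G))\<^sup>*\<^sup>* x (g \<otimes> p)"
      using rtranclp_K_adj_translate[OF g(1) subset_refl, of "carrier G" K y p] g that M_eq_P
      unfolding K_component_def by auto
    ultimately have "x \<in> ?M"
      using sym unfolding K_component_def by (blast intro: rtranclp_trans)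
    with x M_eq_P show False by blast
  qed
  then have "P \<inter> (g <# P) = {}" unfolding l_coset_def by blast
  with component_translate_meets[OF P(1) g(1)] show False ..
qed

lemma B_nonempty: "B \<noteq> {}"
  using L_nonempty component_subset[of L] joined_to_B by blast

lemma translate_into_component:
  assumes "P \<in> {L, R}" "C \<in> \<B>" "B \<subseteq> C" "c\<^sub>0 \<in> C"
    and C_connected: "\<And>c. c \<in> C \<Longrightarrow> (K_adj G K C)\<^sup>*\<^sup>* c\<^sub>0 c"
  obtains g where "g \<in> carrier G" "\<And>c. c \<in> C \<Longrightarrow> g \<otimes> c \<in> P - C"
proof -
  have C: "C \<subseteq> carrier G" using assms(2) bounded_subset_carrier by blast
  \<comment> \<open>\<open>r \<notin> ?E\<close> is exactly what makes \<open>r \<otimes> inv c\<^sub>0\<close> move \<open>C\<close> off itself\<close>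
  let ?E = "(C <#> (\<lambda>x. inv x) ` C) #> c\<^sub>0"
  have "?E \<in> \<B>"
    using assms(2,4) C by (simp add: bounded_r_coset bounded_set_mult bounded_inv_image subsetD)
  moreover have "P \<notin> \<B>" using assms(1) L_unbounded R_unbounded by auto
  ultimately have "\<not> P \<subseteq> ?E" using bounded_subset by blast
  then obtain r where r: "r \<in> P" "r \<notin> ?E" by blast
  have r_carrier: "r \<in> carrier G" using r component_subset[OF assms(1)] by blast
  define g where "g = r \<otimes> inv c\<^sub>0"
  have g: "g \<in> carrier G" "g \<otimes> c\<^sub>0 = r"
    using r_carrier assms(4) C by (auto simp: g_def m_assoc)
  have g_off_C: "g \<otimes> c \<notin> C" if "c \<in> C" for c
  proof
    assume "g \<otimes> c \<in> C"
    then have "(g \<otimes> c) \<otimes> inv c \<in> C <#> (\<lambda>x. inv x) ` C"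
      using that unfolding set_mult_def by blast
    then have "(g \<otimes> c) \<otimes> inv c \<otimes> c\<^sub>0 \<in> ?E"
      unfolding r_coset_def by blast
    moreover have "(g \<otimes> c) \<otimes> inv c \<otimes> c\<^sub>0 = r"
      using that C g by (simp add: m_assoc subsetD)
    ultimately show False using r by simp
  qed
  have into_complement: "g \<otimes> c \<in> carrier G - B" if "c \<in> C" for c
    using g_off_C[OF that] assms(3) g(1) C that by auto
  have "g \<otimes> c \<in> P" if "c \<in> C" for c
  proof -
    have "(K_adj G K (carrier G - B))\<^sup>*\<^sup>* r (g \<otimes> c)"
      using rtranclp_K_adj_translate[OF g(1) C into_complement C_connected[OF that]] g(2) by simp
    then show ?thesis using component_eq[OF assms(1) r(1)] unfolding K_component_def by blast
  qed
  with g(1) g_off_C show ?thesis using that by blast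
qed

lemma component_Un_connected:
  assumes "P \<in> {L, R}" "C \<subseteq> carrier G" "B \<subseteq> C" "c\<^sub>0 \<in> C"
    and C_connected: "\<And>c. c \<in> C \<Longrightarrow> (K_adj G K C)\<^sup>*\<^sup>* c\<^sub>0 c"
    and "z \<in> P \<union> C"
  shows "(K_adj G K (P \<union> C))\<^sup>*\<^sup>* c\<^sub>0 z"
proof -
  have from_C: "(K_adj G K (P \<union> C))\<^sup>*\<^sup>* c\<^sub>0 c" if "c \<in> C" for c
    using rtranclp_K_adj_mono[OF _ C_connected[OF that]] by blast
  have reach: "w \<in> P \<union> B \<longrightarrow> (K_adj G K (P \<union> C))\<^sup>*\<^sup>* c\<^sub>0 w"
    if "(K_adj G K (carrier G))\<^sup>*\<^sup>* b w" "b \<in> B" for b w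
    using that(1)
  proof (induction rule: rtranclp_induct)
    case base
    show ?case using from_C that(2) assms(3) by blast
  next
    case (step y w)
    show ?case
    proof
      assume w: "w \<in> P \<union> B"
      show "(K_adj G K (P \<union> C))\<^sup>*\<^sup>* c\<^sub>0 w"
      proof (cases "w \<in> B")
        case False
        with w have "w \<in> P" by blast
        moreover have "K_adj G K (carrier G) w y"
          using K_adj_sym[OF K_sym step(2) subset_refl] .
        ultimately have "y \<in> P \<union> B" using K_adj_from_component[OF assms(1)] by blast
        moreover have "K_adj G K (P \<union> C) y w"
          using step(2) \<open>y \<in> P \<union> B\<close> \<open>w \<in> P\<close> assms(3) by (auto simp: K_adj_def)
        ultimately show ?thesis using step(3) by (blast intro: rtranclp.rtrancl_into_rtrancl)
      qed (use from_C assms(3) in blast)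
    qed
  qed
  show ?thesis
  proof (cases "z \<in> C")
    case False
    with assms(6) have "z \<in> P" by blast
    moreover obtain b where "b \<in> B" "(K_adj G K (carrier G))\<^sup>*\<^sup>* b z"
      using joined_to_B component_subset[OF assms(1)] calculation by blast
    ultimately show ?thesis using reach by blast
  qed (rule from_C)
qed

lemma inv_translate_into_L:
  assumes "g \<in> carrier G" "C \<subseteq> carrier G" "B \<subseteq> C" "c\<^sub>0 \<in> C"
    and C_connected: "\<And>c. c \<in> C \<Longrightarrow> (K_adj G K C)\<^sup>*\<^sup>* c\<^sub>0 c"
    and g_C: "\<And>c. c \<in> C \<Longrightarrow> g \<otimes> c \<in> R - C"
    and "u \<in> L \<union> C"
  shows "inv g \<otimes> u \<in> L"
proof -
  have LC: "L \<union> C \<subseteq> carrier G" using component_subset[of L] assms(2) by blast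
  have into_complement: "inv g \<otimes> v \<in> carrier G - B" if "v \<in> L \<union> C" for v
  proof -
    have v: "v \<in> carrier G" using that LC by blast
    have "inv g \<otimes> v \<notin> B"
    proof
      assume "inv g \<otimes> v \<in> B"
      then have "g \<otimes> (inv g \<otimes> v) \<in> R - C" using g_C assms(3) by blast
      then have "v \<in> R - C" using v assms(1) by (simp flip: m_assoc)
      with that L_R_disjoint show False by blast
    qed
    with v assms(1) show ?thesis by simp
  qed
  have in_component: "inv g \<otimes> v \<in> K_component G K (carrier G - B) (inv g \<otimes> c\<^sub>0)"
    if "v \<in> L \<union> C" for v
    using rtranclp_K_adj_translate[OF inv_closed[OF assms(1)] LC into_complement
        component_Un_connected[of L, OF _ assms(2-4) C_connected that]]
    unfolding K_component_def by simp
  have "inv g \<otimes> c\<^sub>0 \<in> L"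
  proof (rule ccontr)
    assume "inv g \<otimes> c\<^sub>0 \<notin> L"
    then have "inv g \<otimes> c\<^sub>0 \<in> R" using into_complement assms(4) L_Un_R by blast
    then have L_to_R: "inv g \<otimes> l \<in> R" if "l \<in> L" for l
      using in_component that component_eq[of R] by blast
    have "L \<inter> (g <# L) = {}"
    proof (rule equals0I)
      fix l assume "l \<in> L \<inter> (g <# L)"
      then obtain l' where "l \<in> L" "l' \<in> L" "l = g \<otimes> l'" unfolding l_coset_def by blast
      moreover have "l' \<in> carrier G" using \<open>l' \<in> L\<close> LC by blast
      ultimately have "l' \<in> R" using L_to_R[of l] assms(1) by (simp flip: m_assoc)
      with \<open>l' \<in> L\<close> L_R_disjoint show False by blast
    qed
    with component_translate_meets[OF _ assms(1), of L] show False by simp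
  qed
  then show ?thesis using in_component[OF assms(7)] component_eq[of L] by blast
qed

lemma exists_shift:
  assumes "C \<in> \<B>" "B \<subseteq> C" "c\<^sub>0 \<in> C"
    and C_connected: "\<And>c. c \<in> C \<Longrightarrow> (K_adj G K C)\<^sup>*\<^sup>* c\<^sub>0 c"
  obtains g where "g \<in> carrier G"
    "\<And>z. z \<in> R \<union> B \<Longrightarrow> g \<otimes> z \<in> R" "\<And>z. z \<in> L \<union> B \<Longrightarrow> inv g \<otimes> z \<in> L"
proof -
  have C: "C \<subseteq> carrier G" using assms(1) bounded_subset_carrier by blast
  obtain g where g: "g \<in> carrier G" "\<And>c. c \<in> C \<Longrightarrow> g \<otimes> c \<in> R - C"
    using translate_into_component[of R, OF _ assms] by blast
  have to_L: "inv g \<otimes> z \<in> L" if "z \<in> L \<union> B" for z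
    using inv_translate_into_L[OF g(1) C assms(2,3) C_connected g(2)] that assms(2) by blast
  have "g \<otimes> z \<in> R" if "z \<in> R \<union> B" for z
  proof (cases "z \<in> B")
    case False
    with that have z: "z \<in> R" "z \<in> carrier G" using component_subset[of R] by auto
    have "g \<otimes> z \<notin> L \<union> B"
    proof
      assume "g \<otimes> z \<in> L \<union> B"
      then have "inv g \<otimes> (g \<otimes> z) \<in> L" by (rule to_L)
      with z g(1) L_R_disjoint show False by (auto simp flip: m_assoc)
    qed
    with z g(1) L_Un_R show ?thesis by auto
  qed (use g(2) assms(2) in blast)
  with g(1) to_L show ?thesis using that by blast
qed

lemma eventually_pow_mult_in_component:
  assumes "P \<in> {L, R}" "f \<in> carrier G" "\<And>z. z \<in> P \<union> B \<Longrightarrow> f \<otimes> z \<in> P"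
    and "x \<in> carrier G"
  shows "\<exists>N. \<forall>n\<ge>N. f [^] (n::nat) \<otimes> x \<in> P"
proof -
  have PB: "P \<union> B \<subseteq> carrier G" using component_subset[OF assms(1)] B_carrier by blast
  have pow_in: "f [^] n \<otimes> z \<in> P" if "z \<in> P \<union> B" "1 \<le> n" for z and n :: nat
    using nat_pow_mult_mem[OF assms(2) _ that(1) assms(3) that(2)] that(1) PB by blast
  obtain b where "b \<in> B" "(K_adj G K (carrier G))\<^sup>*\<^sup>* b x"
    using joined_to_B[OF assms(4)] by blast
  from this(2) show ?thesis
  proof (induction rule: rtranclp_induct)
    case base
    show ?case using pow_in \<open>b \<in> B\<close> by blast
  next
    case (step y w)
    then obtain N where N: "\<forall>n\<ge>N. f [^] (n::nat) \<otimes> y \<in> P" by blast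
    have w: "w \<in> carrier G" using step(2) by (simp add: K_adj_def)
    \<comment> \<open>once the orbit of \<open>w\<close> meets \<open>B\<close> it stays in \<open>P\<close>; until then it shadows the orbit of \<open>y\<close>\<close>
    show ?case
    proof (cases "\<exists>m\<ge>N. f [^] (m::nat) \<otimes> w \<in> B")
      case True
      then obtain m :: nat where m: "f [^] m \<otimes> w \<in> B" by blast
      have "f [^] n \<otimes> w \<in> P" if "n \<ge> Suc m" for n
      proof -
        have "f [^] n \<otimes> w = f [^] (n - m) \<otimes> (f [^] m \<otimes> w)"
          using that assms(2) w by (simp add: nat_pow_mult m_assoc flip: m_assoc)
        then show ?thesis using pow_in[of "f [^] m \<otimes> w" "n - m"] m that by simp
      qed
      then show ?thesis by blast
    next
      case False
      have "f [^] n \<otimes> w \<in> P" if "n \<ge> N" for n :: nat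
      proof -
        have "K_adj G K (carrier G) (f [^] n \<otimes> y) (f [^] n \<otimes> w)"
          using K_adj_translate[OF _ subset_refl _ step(2)] assms(2) by simp
        then have "f [^] n \<otimes> w \<in> P \<union> B"
          using K_adj_from_component[OF assms(1)] N that by blast
        with False that show ?thesis by blast
      qed
      then show ?thesis by blast
    qed
  qed
qed

lemma exists_int_pow_mult_in_fundamental_domain:
  assumes "g \<in> carrier G"
    and "\<And>z. z \<in> R \<union> B \<Longrightarrow> g \<otimes> z \<in> R" "\<And>z. z \<in> L \<union> B \<Longrightarrow> inv g \<otimes> z \<in> L"
    and "x \<in> carrier G"
  shows "\<exists>m::int. g [^] m \<otimes> x \<in> R - (g <# R)"
proof -
  define in_R where "in_R m \<longleftrightarrow> g [^] (m::int) \<otimes> x \<in> R" for m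
  obtain N\<^sub>1 where "\<forall>n\<ge>N\<^sub>1. g [^] (n::nat) \<otimes> x \<in> R"
    using eventually_pow_mult_in_component[of R, OF _ assms(1,2,4)] by blast
  then have "in_R (int N\<^sub>1)" by (simp add: in_R_def int_pow_int)
  moreover obtain N\<^sub>2 where "\<forall>n\<ge>N\<^sub>2. inv g [^] (n::nat) \<otimes> x \<in> L"
    using eventually_pow_mult_in_component[of L, OF _ inv_closed[OF assms(1)] assms(3,4)] by blast
  then have "\<not> in_R (- int N\<^sub>2)"
    using L_R_disjoint assms(1) by (auto simp: in_R_def int_pow_neg_int nat_pow_inv)
  moreover have "- int N\<^sub>2 + int (N\<^sub>1 + N\<^sub>2) = int N\<^sub>1" by simp
  ultimately obtain m where m: "\<not> in_R (m - 1)" "in_R m"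
    using exists_int_crossing[of in_R "- int N\<^sub>2" "N\<^sub>1 + N\<^sub>2"] by auto
  have "g [^] (m - 1) = inv g \<otimes> g [^] m"
    using int_pow_mult[OF assms(1), of "-1" m] int_pow_neg[OF assms(1), of 1] assms(1) by simp
  then have "g [^] (m - 1) \<otimes> x = inv g \<otimes> (g [^] m \<otimes> x)"
    using assms(1,4) by (simp add: m_assoc)
  with m have "g [^] m \<otimes> x \<notin> g <# R"
    using assms(1) component_subset[of R]
    unfolding in_R_def l_coset_def by (auto simp flip: m_assoc)
  with m(2) show ?thesis unfolding in_R_def by blast
qed

lemma bounded_index_powers:
  assumes "g \<in> carrier G"
    and "\<And>z. z \<in> R \<union> B \<Longrightarrow> g \<otimes> z \<in> R" "\<And>z. z \<in> L \<union> B \<Longrightarrow> inv g \<otimes> z \<in> L"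
  shows "bounded_index G \<B> {g [^] (k::int) | k. True}"
proof -
  let ?H = "{g [^] (k::int) | k. True}"
  let ?D = "R - (g <# R)"
  have "(R - (g <# R)) \<union> ((g <# R) - R) \<in> \<B>"
    using R_trivial assms(1) unfolding acts_trivially_def by blast
  then have "?D \<in> \<B>" by (rule bounded_subset) blast
  then have "(\<lambda>x. inv x) ` ?D \<in> \<B>" by (rule bounded_inv_image)
  moreover have "(\<lambda>x. inv x) ` ?D <#> ?H = carrier G"
  proof
    have "(\<lambda>x. inv x) ` ?D \<subseteq> carrier G" "?H \<subseteq> carrier G"
      using component_subset[of R] assms(1) by auto
    then show "(\<lambda>x. inv x) ` ?D <#> ?H \<subseteq> carrier G" by (rule set_mult_closed)
    show "carrier G \<subseteq> (\<lambda>x. inv x) ` ?D <#> ?H"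
    proof
      fix y assume y: "y \<in> carrier G"
      then obtain m :: int where "g [^] m \<otimes> inv y \<in> ?D"
        using exists_int_pow_mult_in_fundamental_domain[OF assms] by blast
      then have "inv (g [^] m \<otimes> inv y) \<in> (\<lambda>x. inv x) ` ?D" by (rule imageI)
      moreover have "g [^] m \<in> ?H" by blast
      moreover have "y = inv (g [^] m \<otimes> inv y) \<otimes> g [^] m"
        using y assms(1) by (simp add: inv_mult_group m_assoc)
      ultimately show "y \<in> (\<lambda>x. inv x) ` ?D <#> ?H"
        unfolding set_mult_def by blast
    qed
  qed
  ultimately show ?thesis unfolding bounded_index_def by blast
qed

lemma exists_connected_bounded_superset:
  assumes "K \<subseteq> carrier G" "K \<in> \<B>" "\<one> \<in> K"
    and "K_connected G K B \<or> (\<exists>h\<in>carrier G. \<exists>n\<ge>1. B \<subseteq> h <# set_pow G K n)"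
  obtains C c\<^sub>0 where "C \<in> \<B>" "B \<subseteq> C" "c\<^sub>0 \<in> C" "\<And>c. c \<in> C \<Longrightarrow> (K_adj G K C)\<^sup>*\<^sup>* c\<^sub>0 c"
  using assms(4)
proof
  assume "K_connected G K B"
  obtain c\<^sub>0 where "c\<^sub>0 \<in> B" using B_nonempty by blast
  show thesis
  proof (rule that[of B c\<^sub>0])
    show "c \<in> B \<Longrightarrow> (K_adj G K B)\<^sup>*\<^sup>* c\<^sub>0 c" for c
      using K_connected_imp_rtranclp[OF \<open>K_connected G K B\<close> \<open>c\<^sub>0 \<in> B\<close>] .
  qed (use B_bounded \<open>c\<^sub>0 \<in> B\<close> in auto)
next
  assume "\<exists>h\<in>carrier G. \<exists>n\<ge>1. B \<subseteq> h <# set_pow G K n"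
  then obtain h n where h: "h \<in> carrier G" "B \<subseteq> h <# set_pow G K n" by blast
  have "h \<otimes> \<one> \<in> h <# set_pow G K n"
    using one_in_set_pow[OF assms(1,3)] unfolding l_coset_def by blast
  show thesis
  proof (rule that[of "h <# set_pow G K n" h])
    show "h <# set_pow G K n \<in> \<B>"
      using bounded_l_coset[OF h(1) bounded_set_pow[OF assms(2)]] .
    show "h \<in> h <# set_pow G K n"
      using \<open>h \<otimes> \<one> \<in> _\<close> h(1) by simp
    show "c \<in> h <# set_pow G K n \<Longrightarrow> (K_adj G K (h <# set_pow G K n))\<^sup>*\<^sup>* h c" for c
      by (rule rtranclp_K_adj_l_coset_set_pow[OF assms(1,3) h(1)])
  qed (rule h(2))
qed

end

theorem proposition5p6:
  fixes G :: "('a, 'b) monoid_scheme" and \<B> :: "'a set set"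
    and K B L R :: "'a set"
  assumes "large_scale_group G \<B>"
    and "K \<subseteq> carrier G" and "(\<lambda>x. inv\<^bsub>G\<^esub> x) ` K = K" and "K \<in> \<B>" and "\<one>\<^bsub>G\<^esub> \<in> K"
    and "B \<in> \<B>"
    and "K_components G K (carrier G - B) = {L, R}" and "L \<noteq> R"
    and "L \<notin> \<B>" and "R \<notin> \<B>"
    and "acts_trivially G \<B> L" and "acts_trivially G \<B> R"
    and "K_connected G K B \<or>
         (\<exists>h\<in>carrier G. \<exists>n\<ge>1. B \<subseteq> h <#\<^bsub>G\<^esub> set_pow G K n)"
  shows "\<exists>g\<in>carrier G. subgroup {g [^]\<^bsub>G\<^esub> (k::int) | k. True} G \<and>
           bounded_index G \<B> {g [^]\<^bsub>G\<^esub> (k::int) | k. True}"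
proof -
  have "group G" using assms(1) by (simp add: large_scale_group_def)
  interpret two_component_cut G \<B> K B L R
    by (intro two_component_cut.intro large_scale_structure.intro
        large_scale_structure_axioms.intro two_component_cut_axioms.intro) (rule \<open>group G\<close> assms)+
  obtain C c\<^sub>0 where "C \<in> \<B>" "B \<subseteq> C" "c\<^sub>0 \<in> C" "\<And>c. c \<in> C \<Longrightarrow> (K_adj G K C)\<^sup>*\<^sup>* c\<^sub>0 c"
    using exists_connected_bounded_superset[OF assms(2,4,5,13)] by blast
  then obtain g where g: "g \<in> carrier G"
    "\<And>z. z \<in> R \<union> B \<Longrightarrow> g \<otimes>\<^bsub>G\<^esub> z \<in> R" "\<And>z. z \<in> L \<union> B \<Longrightarrow> inv\<^bsub>G\<^esub> g \<otimes>\<^bsub>G\<^esub> z \<in> L"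
    using exists_shift by blast
  have "{g [^]\<^bsub>G\<^esub> (k::int) | k. True} = range (\<lambda>k::int. g [^]\<^bsub>G\<^esub> k)" by blast
  then have "subgroup {g [^]\<^bsub>G\<^esub> (k::int) | k. True} G"
    using subgroup_of_powers[OF g(1)] by simp
  with g bounded_index_powers show ?thesis by blast
qed

end
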